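(* Let $R>0$ and let $(m,n)$, $(m',n')$ be integer points on the ellipse $X^2+XY+Y^2=R^2$ with $1\le m<m'\le n'<n$. Then $F_R(m,n)>F_R(m',n')$, and, as $R\to\infty$, $$F_R(m,n)-F_R(m',n')\gg\frac1{m^4},$$ with an absolute implied constant.
   Context: For integers $m,n\ge1$ with $m^2+mn+n^2=R^2$, $F_R(m,n)=\frac{R^4}{m^2n^2(m+n)^2}=\frac1{m^2}+\frac1{n^2}+\frac1{(m+n)^2}$. *)

theory Defs
  imports Complex_Main
begin

definition F :: "real \<Rightarrow> int \<Rightarrow> int \<Rightarrow> real" where
  "F R m n = R ^ 4 / (real_of_int m ^ 2 * real_of_int n ^ 2 * real_of_int (m + n) ^ 2)"

end

theory Submission
  imports Defs
begin

text \<open>On the ellipse, \<open>R\<^sup>4 = (m\<^sup>2 + mn + n\<^sup>2)\<^sup>2\<close> splits \<open>F\<^sub>R(m,n)\<close> into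
  \<open>1/m\<^sup>2 + 1/n\<^sup>2 + 1/(m+n)\<^sup>2\<close>. Along the arc from \<open>(m,n)\<close> to \<open>(m',n')\<close> the second
  coordinate drops by at most \<open>m' - m\<close>, so the loss \<open>1/n'\<^sup>2 - 1/n\<^sup>2 \<le> 2(m'-m)/m'\<^sup>3\<close>
  is beaten by the gain \<open>1/m\<^sup>2 - 1/m'\<^sup>2\<close>; the surplus is
  \<open>(m'-m)\<^sup>2(m'+2m)/(m\<^sup>2m'\<^sup>3) \<ge> 1/(4m\<^sup>4)\<close>. The third term can only help,
  since the same drop bound gives \<open>m+n \<le> m'+n'\<close>.\<close>

lemma square_of_ellipse_over_product:
  fixes a c :: "'a::field"
  assumes "a \<noteq> 0" "c \<noteq> 0" "a + c \<noteq> 0"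
  shows "(a\<^sup>2 + a*c + c\<^sup>2)\<^sup>2 / (a\<^sup>2 * c\<^sup>2 * (a + c)\<^sup>2) = 1/a\<^sup>2 + 1/c\<^sup>2 + 1/(a + c)\<^sup>2"
  using assms by (simp add: field_simps) algebra

lemma F_eq_sum_inverse_squares:
  fixes R :: real and m n :: int
  assumes "m \<ge> 1" "n \<ge> 1" "real_of_int (m\<^sup>2 + m*n + n\<^sup>2) = R\<^sup>2"
  shows "F R m n = 1/(real_of_int m)\<^sup>2 + 1/(real_of_int n)\<^sup>2 + 1/(real_of_int m + real_of_int n)\<^sup>2"
proof -
  define a c where "a = real_of_int m" and "c = real_of_int n"
  have "R ^ 4 = (R\<^sup>2)\<^sup>2"
    by (simp flip: power_mult)
  also have "\<dots> = (a\<^sup>2 + a*c + c\<^sup>2)\<^sup>2"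
    using assms(3) by (simp add: a_def c_def)
  finally have "F R m n = (a\<^sup>2 + a*c + c\<^sup>2)\<^sup>2 / (a\<^sup>2 * c\<^sup>2 * (a + c)\<^sup>2)"
    by (simp add: F_def a_def c_def)
  also have "\<dots> = 1/a\<^sup>2 + 1/c\<^sup>2 + 1/(a + c)\<^sup>2"
    by (rule square_of_ellipse_over_product) (use assms in \<open>auto simp: a_def c_def\<close>)
  finally show ?thesis
    by (simp add: a_def c_def)
qed

lemma ellipse_second_coordinate_drop:
  fixes m n m' n' :: "'a::linordered_idom"
  assumes "m\<^sup>2 + m*n + n\<^sup>2 = m'\<^sup>2 + m'*n' + n'\<^sup>2" "1 \<le> m" "m < m'" "m' \<le> n'" "n' < n"
  shows "n - n' \<le> m' - m"
proof -
  have factored: "(n - n') * (n + n' + m) = (m' - m) * (m' + m + n')"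
    using assms(1) by (simp add: algebra_simps power2_eq_square)
  have "(m' - m) * (m' + m + n') \<le> (m' - m) * (n + n' + m)"
    using assms by (intro mult_left_mono) auto
  with factored have "(n - n') * (n + n' + m) \<le> (m' - m) * (n + n' + m)" by simp
  then show ?thesis using assms by (simp add: mult_le_cancel_right)
qed

lemma inverse_square_diff_le:
  fixes b c d :: real
  assumes "0 < b" "b \<le> d" "d < c"
  shows "1/d\<^sup>2 - 1/c\<^sup>2 \<le> 2 * (c - d) / b^3"
proof -
  have "1/d\<^sup>2 - 1/c\<^sup>2 = (c - d) * (c + d) / (c\<^sup>2 * d\<^sup>2)"
    using assms by (simp add: field_simps power2_eq_square)
  also have "\<dots> \<le> (c - d) * (2*c) / (c\<^sup>2 * d\<^sup>2)"
    using assms by (intro divide_right_mono mult_left_mono) auto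
  also have "\<dots> = 2 * (c - d) / (c * d\<^sup>2)"
    using assms by (simp add: field_simps power2_eq_square)
  also have "\<dots> \<le> 2 * (c - d) / b^3"
  proof -
    have "b * (b * b) \<le> c * (d * d)"
      using assms by (intro mult_mono) auto
    then have "b^3 \<le> c * d\<^sup>2"
      by (simp add: power3_eq_cube power2_eq_square)
    then show ?thesis using assms by (intro divide_left_mono) auto
  qed
  finally show ?thesis .
qed

lemma inverse_square_gain_ge:
  fixes a b :: real
  assumes "1 \<le> a" "a + 1 \<le> b"
  shows "1/a\<^sup>2 - 1/b\<^sup>2 - 2 * (b - a) / b^3 \<ge> 1 / (4 * a^4)"
proof -
  have "0 \<le> (a - 1/2) * (b - (a + 1))"
    using assms by (intro mult_nonneg_nonneg) auto
  moreover have "(a - 1/2) * (b - (a + 1)) = a * (b - a) - b/2 - (a - 1)/2"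
    by (simp add: field_simps)
  ultimately have "b/2 \<le> a * (b - a)"
    using assms by argo
  then have "b\<^sup>2 \<le> (2 * a * (b - a))\<^sup>2"
    using assms by (intro power_mono) auto
  then have "b\<^sup>2 \<le> 4 * a\<^sup>2 * (b - a)\<^sup>2"
    by (simp add: power_mult_distrib)
  then have "b^3 \<le> 4 * a\<^sup>2 * (b - a)\<^sup>2 * (b + 2*a)"
    using mult_mono[of "b\<^sup>2" "4 * a\<^sup>2 * (b - a)\<^sup>2" b "b + 2*a"] assms
    by (simp add: power3_eq_cube power2_eq_square)
  then have "1 / (4 * a^4) \<le> (b - a)\<^sup>2 * (b + 2*a) / (a\<^sup>2 * b^3)"
    using assms by (simp add: field_simps power2_eq_square power3_eq_cube power4_eq_xxxx)
  also have "\<dots> = 1/a\<^sup>2 - 1/b\<^sup>2 - 2 * (b - a) / b^3"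
    using assms by (simp add: field_simps power2_eq_square power3_eq_cube)
  finally show ?thesis .
qed

lemma sum_inverse_squares_gap:
  fixes a b c d :: real
  assumes "1 \<le> a" "a + 1 \<le> b" "b \<le> d" "d < c" "c - d \<le> b - a"
  shows "(1/a\<^sup>2 + 1/c\<^sup>2 + 1/(a + c)\<^sup>2) - (1/b\<^sup>2 + 1/d\<^sup>2 + 1/(b + d)\<^sup>2) \<ge> 1 / (4 * a^4)"
proof -
  have "1/(b + d)\<^sup>2 \<le> 1/(a + c)\<^sup>2"
    using assms by (intro divide_left_mono power_mono) auto
  moreover have "1/d\<^sup>2 - 1/c\<^sup>2 \<le> 2 * (b - a) / b^3"
  proof -
    have "2 * (c - d) / b^3 \<le> 2 * (b - a) / b^3"
      using assms by (intro divide_right_mono) auto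
    then show ?thesis
      using inverse_square_diff_le[of b d c] assms by linarith
  qed
  moreover have "1/a\<^sup>2 - 1/b\<^sup>2 - 2 * (b - a) / b^3 \<ge> 1 / (4 * a^4)"
    using assms(1,2) by (rule inverse_square_gain_ge)
  ultimately show ?thesis by linarith
qed

lemma F_difference_ge:
  fixes R :: real and m n m' n' :: int
  assumes "real_of_int (m\<^sup>2 + m*n + n\<^sup>2) = R\<^sup>2" "real_of_int (m'\<^sup>2 + m'*n' + n'\<^sup>2) = R\<^sup>2"
    "1 \<le> m" "m < m'" "m' \<le> n'" "n' < n"
  shows "F R m n - F R m' n' \<ge> (1/4) / real_of_int m ^ 4"
proof -
  have "m\<^sup>2 + m*n + n\<^sup>2 = m'\<^sup>2 + m'*n' + n'\<^sup>2"
    using assms(1,2) by (metis of_int_eq_iff)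
  then have "n - n' \<le> m' - m"
    using assms by (intro ellipse_second_coordinate_drop)
  then have "real_of_int n - real_of_int n' \<le> real_of_int m' - real_of_int m"
    by (metis of_int_diff of_int_le_iff)
  then show ?thesis
    using assms sum_inverse_squares_gap[of "real_of_int m" "real_of_int m'" "real_of_int n'" "real_of_int n"]
    by (simp add: F_eq_sum_inverse_squares)
qed

theorem proposition7p2:
  shows "(\<forall>(R::real) (m::int) n m' n'.
            R > 0 \<and> real_of_int (m^2 + m*n + n^2) = R^2 \<and>
            real_of_int (m'^2 + m'*n' + n'^2) = R^2 \<and>
            1 \<le> m \<and> m < m' \<and> m' \<le> n' \<and> n' < n
            \<longrightarrow> F R m n > F R m' n')
      \<and> (\<exists>C>0. \<exists>R0::real. \<forall>(R::real) (m::int) n m' n'.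
            R > R0 \<and> real_of_int (m^2 + m*n + n^2) = R^2 \<and>
            real_of_int (m'^2 + m'*n' + n'^2) = R^2 \<and>
            1 \<le> m \<and> m < m' \<and> m' \<le> n' \<and> n' < n
            \<longrightarrow> F R m n - F R m' n' \<ge> C / real_of_int m ^ 4)"
proof (intro conjI allI impI)
  fix R :: real and m n m' n' :: int
  assume "R > 0 \<and> real_of_int (m^2 + m*n + n^2) = R^2 \<and>
            real_of_int (m'^2 + m'*n' + n'^2) = R^2 \<and>
            1 \<le> m \<and> m < m' \<and> m' \<le> n' \<and> n' < n"
  then have "F R m n - F R m' n' \<ge> (1/4) / real_of_int m ^ 4"
    by (intro F_difference_ge) auto
  moreover have "(1/4) / real_of_int m ^ 4 > 0"
    using \<open>R > 0 \<and> _\<close> by simp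
  ultimately show "F R m n > F R m' n'" by linarith
qed (rule exI[of _ "1/4"], rule conjI, simp, rule exI[of _ 0], blast intro: F_difference_ge)
end
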